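(* Let $m$ be a positive integer and let $S_1,\dots,S_{k-1}$ be pairwise disjoint subsets of $\mathbb{F}_2^m$, and let $d=\dim(\bigcup_iS_i)$. Then $\langle\mathcal{X}^4_{\overline{(S_1,\dots,S_{k-1})}}\rangle\le 2^{2dm+8d^2}B^{2^{d+2}}$, where $B=\max_{i,\epsilon,z}|\mathcal{X}^{(i)}(\epsilon,z)|$.
   Context: Consider a BMS channel with finitely many noise levels: for each input bit $X_x$, the channel independently draws $\epsilon_x\in[0,1/2]$ from a fixed distribution with finite support, draws $Z_x\in\mathbb{F}_2$ equal to $1$ with probability $\epsilon_x$, and outputs $(\epsilon_x,X_x+Z_x)$. Let $k$ be the number of possible pairs $(\epsilon_x,Z_x)$ and $\nu$ their joint distribution. Let $\mathcal{X}^{(0)},\dots,\mathcal{X}^{(k-1)}$ be functions from these pairs to $\mathbb{R}$ that are orthonormal in $L^2(\nu)$, with $\mathcal{X}^{(0)}\equiv1$. For pairwise disjoint $S_1,\dots,S_{k-1}\subseteq\mathbb{F}_2^m$, $\mathcal{X}_{(S_1,\dots,S_{k-1})}(\epsilon,Z)=\prod_{i=1}^{k-1}\prod_{x\in S_i}\mathcal{X}^{(i)}(\epsilon_x,Z_x)$, a function of $(\epsilon_x,Z_x)_{x\in\mathbb{F}_2^m}$. $\langle g\rangle$ is the expectation of $g$ when $(\epsilon_x,Z_x)_{x\in\mathbb{F}_2^m}$ are i.i.d. with law $\nu$. $\overline{(S_1,\dots,S_{k-1})}$ is the set of distinct tuples $(\pi(S_1),\dots,\pi(S_{k-1}))$ over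 invertible linear maps $\pi$ of $\mathbb{F}_2^m$, and $\mathcal{X}_{\overline{(S_1,\dots,S_{k-1})}}$ is the sum of $\mathcal{X}_{T}$ over tuples $T$ in this set. $\dim$ denotes the dimension of the linear span in $\mathbb{F}_2^m$. *)

theory Defs
  imports "HOL-Analysis.Analysis" "HOL-Probability.Probability" "HOL-Library.Z2"
begin

text \<open>F_2^m is modelled as bit^'n with m = CARD('n). Noise pairs (epsilon, Z) are
  elements of real \<times> bool (Z = True meaning Z = 1).\<close>

definition BMS_channel :: "(real \<times> bool) pmf \<Rightarrow> bool" where
  "BMS_channel \<nu> \<longleftrightarrow> (\<exists>\<mu>::real pmf. finite (set_pmf \<mu>) \<and> set_pmf \<mu> \<subseteq> {0..1/2} \<and>
      \<nu> = bind_pmf \<mu> (\<lambda>e. map_pmf (\<lambda>z. (e, z)) (bernoulli_pmf e)))"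

definition chiS :: "(nat \<Rightarrow> real \<times> bool \<Rightarrow> real) \<Rightarrow> nat \<Rightarrow> (nat \<Rightarrow> (bit^'n) set)
    \<Rightarrow> ((bit^'n) \<Rightarrow> real \<times> bool) \<Rightarrow> real" where
  "chiS X k S \<omega> = (\<Prod>i\<in>{1..<k}. \<Prod>x\<in>S i. X i (\<omega> x))"

definition linear_auts :: "((bit^'n) \<Rightarrow> (bit^'n)) set" where
  "linear_auts = {\<pi>. Vector_Spaces.linear (*s) (*s) \<pi> \<and> bij \<pi>}"

definition orbit :: "nat \<Rightarrow> (nat \<Rightarrow> (bit^'n) set) \<Rightarrow> (nat \<Rightarrow> (bit^'n) set) set" where
  "orbit k S = {restrict (\<lambda>i. \<pi> ` S i) {1..<k} | \<pi>. \<pi> \<in> linear_auts}"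

definition chi_orbit :: "(nat \<Rightarrow> real \<times> bool \<Rightarrow> real) \<Rightarrow> nat \<Rightarrow> (nat \<Rightarrow> (bit^'n) set)
    \<Rightarrow> ((bit^'n) \<Rightarrow> real \<times> bool) \<Rightarrow> real" where
  "chi_orbit X k S \<omega> = (\<Sum>T\<in>orbit k S. chiS X k T \<omega>)"

definition avg :: "(real \<times> bool) pmf \<Rightarrow> (((bit^'n) \<Rightarrow> real \<times> bool) \<Rightarrow> real) \<Rightarrow> real" where
  "avg \<nu> g = measure_pmf.expectation (Pi_pmf UNIV undefined (\<lambda>_. \<nu>)) g"

end

theory Submission
  imports Defs
begin

(* Expanding the fourth power writes the moment as a sum, over quadruples (T1, ..., T4) of
   tuples in the orbit, of the expectations of chi_T1 ... chi_T4. The sites are independent and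
   every X^(i) with i >= 1 has mean zero (it is orthogonal to X^(0) = 1), so a quadruple
   contributes nothing as soon as some point lies in exactly one of the four supports; otherwise
   its contribution is at most B^(4 * 2^d). The supports are images of the d-dimensional span of
   the union of the S_i, and if each of them is covered by the other three, the modular law for
   dimensions bounds the dimension of their union by 2d. Such a quadruple therefore lives in the
   span of 2d vectors (2^(2dm) choices), in which each T_j is determined by the images of a basis
   of d vectors (2^(2d^2) choices each), so at most 2^(2dm + 8d^2) quadruples contribute. *)

lemma UNIV_bit: "(UNIV :: bit set) = {0, 1}"
  using bit.exhaust by blast

instance bit :: finite
  by standard (simp add: UNIV_bit)

lemma CARD_bit [simp]: "CARD(bit) = 2"
  by (simp add: UNIV_bit)

lemma card_image_le_card_image:
  assumes "finite A" and "\<And>x y. x \<in> A \<Longrightarrow> y \<in> A \<Longrightarrow> g x = g y \<Longrightarrow> f x = f y"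
  shows "card (f ` A) \<le> card (g ` A)"
proof -
  have "f (inv_into A g (g x)) = f x" if "x \<in> A" for x
    using assms(2)[of "inv_into A g (g x)" x] inv_into_into[of "g x" g A] f_inv_into_f[of "g x" g A] that
    by blast
  then have "f ` A = (\<lambda>z. f (inv_into A g z)) ` g ` A"
    unfolding image_image by (intro image_cong) simp_all
  then show ?thesis
    using assms(1) by (simp add: card_image_le)
qed

lemma (in module) card_span_le:
  assumes "finite (UNIV :: 'a set)" and "finite A"
  shows "card (span A) \<le> CARD('a) ^ card A"
proof -
  let ?comb = "\<lambda>u. \<Sum>v\<in>A. scale (u v) v"
  have "?comb u = ?comb (restrict u A)" for u
    by (intro sum.cong) auto
  then have "?comb u \<in> ?comb ` (A \<rightarrow>\<^sub>E UNIV)" for u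
    by (intro image_eqI[of _ _ "restrict u A"]) auto
  then have "range ?comb = ?comb ` (A \<rightarrow>\<^sub>E UNIV)"
    by blast
  then have "span A = ?comb ` (A \<rightarrow>\<^sub>E UNIV)"
    by (simp add: span_finite[OF assms(2)])
  then have "card (span A) \<le> card (A \<rightarrow>\<^sub>E (UNIV :: 'a set))"
    by (simp add: card_image_le finite_PiE assms)
  also have "\<dots> = CARD('a) ^ card A"
    by (simp add: card_funcsetE assms)
  finally show ?thesis .
qed

context finite_dimensional_vector_space
begin

lemma card_span_le_dim:
  assumes "finite (UNIV :: 'a set)"
  shows "card (span A) \<le> CARD('a) ^ dim A"
proof -
  obtain B where B: "B \<subseteq> A" "independent B" "A \<subseteq> span B" "card B = dim A"
    using basis_exists by blast
  have "span A = span B"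
    using B(1,3) by (auto simp: span_eq intro: span_base)
  then show ?thesis
    using card_span_le[OF assms finiteI_independent[OF B(2)]] B(4) by simp
qed

lemma dim_Un_Int_span: "dim (A \<union> B) + dim (span A \<inter> span B) = dim A + dim B"
proof -
  have "{x + y |x y. x \<in> span A \<and> y \<in> span B} = span (A \<union> B)"
    by (simp add: span_Un)
  then show ?thesis
    using dim_sums_Int[OF subspace_span subspace_span, of A B] by simp
qed

lemma dim_Un_le: "dim (A \<union> B) \<le> dim A + dim B"
  using dim_Un_Int_span[of A B] by linarith

lemma subset_span_image_lessThan:
  assumes "dim A \<le> n"
  obtains C :: "nat \<Rightarrow> 'b" where "A \<subseteq> span (C ` {..<n})"
proof -
  obtain B where B: "independent B" "A \<subseteq> span B" "card B = dim A"
    using basis_exists by blast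
  obtain C where "bij_betw C {..<card B} B"
    using ex_bij_betw_nat_finite[OF finiteI_independent[OF B(1)]] by (auto simp: atLeast0LessThan)
  then have "B \<subseteq> C ` {..<n}"
    using assms B(3) by (auto simp: bij_betw_def)
  then show ?thesis
    by (intro that order.trans[OF B(2)] span_mono)
qed

lemma card_span_image_lessThan_le:
  assumes "finite (UNIV :: 'a set)"
  shows "card (span (C ` {..<n})) \<le> CARD('a) ^ n"
proof -
  have "dim (C ` {..<n}) \<le> n"
    using dim_le_card'[of "C ` {..<n}"] card_image_le[of "{..<n}" C] by simp
  moreover have "1 \<le> CARD('a)"
    using assms by (simp add: Suc_leI finite_UNIV_card_ge_0)
  ultimately show ?thesis
    using card_span_le_dim[OF assms, of "C ` {..<n}"] power_increasing order.trans by blast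
qed

end

definition doubly_covered :: "'i set \<Rightarrow> ('i \<Rightarrow> 'a set) \<Rightarrow> bool" where
  "doubly_covered J P \<longleftrightarrow> (\<forall>j\<in>J. P j \<subseteq> (\<Union>i\<in>J - {j}. P i))"

lemma (in finite_dimensional_vector_space) dim_Union4_le_if_doubly_covered:
  fixes P :: "nat \<Rightarrow> 'b set"
  assumes cov: "doubly_covered {..<4} P" and dim: "\<And>j. j < 4 \<Longrightarrow> dim (P j) \<le> d"
  shows "dim (\<Union>j<4. P j) \<le> 2 * d"
proof -
  let ?Z = "\<Union>j<4. P j"
  have four: "{..<4} = {0, 1, 2, 3 :: nat}" by auto
  (* Splitting the four sets into two pairs in both ways and applying the modular law to each
     pair gives 2 dim Z \<le> dim (P 0) + dim (P 1) + dim (P 2) + dim (P 3). *)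
  have split: "dim ?Z \<le> dim (P a \<union> P b) + dim (span (P c) \<inter> span (P e))"
    if "{a, b, c, e} = {..<4}" "distinct [a, b, c, e]" for a b c e
  proof -
    have "{a, b, c, e} - {c} = {a, b, e}" "{a, b, c, e} - {e} = {a, b, c}"
      using that(2) by auto
    moreover have "c \<in> {a, b, c, e}" "e \<in> {a, b, c, e}"
      by simp_all
    ultimately have "P c \<subseteq> P a \<union> P b \<union> P e" "P e \<subseteq> P a \<union> P b \<union> P c"
      using cov unfolding doubly_covered_def that(1)[symmetric] by fastforce+
    moreover have "?Z = P a \<union> P b \<union> P c \<union> P e"
      unfolding that(1)[symmetric] by auto
    moreover have "P c \<inter> P e \<subseteq> span (P c) \<inter> span (P e)"
      using span_superset[of "P c"] span_superset[of "P e"] by blast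
    ultimately have "?Z \<subseteq> P a \<union> P b \<union> (span (P c) \<inter> span (P e))"
      by blast
    then have "dim ?Z \<le> dim (P a \<union> P b \<union> (span (P c) \<inter> span (P e)))"
      by (rule dim_subset)
    then show ?thesis
      using dim_Un_le[of "P a \<union> P b" "span (P c) \<inter> span (P e)"] by linarith
  qed
  have "dim ?Z \<le> dim (P 0 \<union> P 1) + dim (span (P 2) \<inter> span (P 3))"
    by (rule split) (auto simp: four)
  moreover have "dim ?Z \<le> dim (P 2 \<union> P 3) + dim (span (P 0) \<inter> span (P 1))"
    by (rule split) (auto simp: four)
  moreover have "dim (P 0) + dim (P 1) + dim (P 2) + dim (P 3) \<le> 4 * d"
    using dim[of 0] dim[of 1] dim[of 2] dim[of 3] by simp
  ultimately show ?thesis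
    using dim_Un_Int_span[of "P 0" "P 1"] dim_Un_Int_span[of "P 2" "P 3"] by linarith
qed

definition support :: "nat \<Rightarrow> (nat \<Rightarrow> 'a set) \<Rightarrow> 'a set" where
  "support k T = (\<Union>i\<in>{1..<k}. T i)"

definition tuple_image :: "nat \<Rightarrow> ('a \<Rightarrow> 'b) \<Rightarrow> (nat \<Rightarrow> 'a set) \<Rightarrow> nat \<Rightarrow> 'b set" where
  "tuple_image k f S = restrict (\<lambda>i. f ` S i) {1..<k}"

lemma support_tuple_image [simp]: "support k (tuple_image k f S) = f ` support k S"
  unfolding support_def tuple_image_def by auto

lemma orbit_eq_image: "orbit k S = (\<lambda>\<pi>. tuple_image k \<pi> S) ` linear_auts"
  unfolding orbit_def tuple_image_def by auto

lemma orbitE: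
  assumes "T \<in> orbit k S"
  obtains \<pi> where "Vector_Spaces.linear (*s) (*s) \<pi>" "bij \<pi>" "T = tuple_image k \<pi> S"
  using assms unfolding orbit_eq_image linear_auts_def by blast

lemma finite_orbit: "finite (orbit k (S :: nat \<Rightarrow> (bit^'n) set))"
  unfolding orbit_eq_image by simp

lemma disjoint_family_on_orbit:
  assumes "disjoint_family_on S {1..<k}" and "T \<in> orbit k S"
  shows "disjoint_family_on T {1..<k}"
proof -
  obtain \<pi> where "bij \<pi>" and T: "T = tuple_image k \<pi> S"
    using assms(2) by (rule orbitE)
  have "T i = \<pi> ` S i" if "i \<in> {1..<k}" for i
    using that unfolding T tuple_image_def by simp
  moreover from \<open>bij \<pi>\<close> have "inj \<pi>"
    by (rule bij_is_inj)
  ultimately show ?thesis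
    using assms(1) unfolding disjoint_family_on_def by (metis image_Int image_empty)
qed

lemma dim_support_orbit_le:
  assumes "T \<in> orbit k S"
  shows "vec.dim (support k T) \<le> vec.dim (support k S)"
proof -
  obtain \<pi> where "Vector_Spaces.linear (*s) (*s) \<pi>" and "T = tuple_image k \<pi> S"
    using assms by (rule orbitE)
  then show ?thesis
    by (simp add: vec.dim_image_le)
qed

lemma card_support_orbit_le:
  fixes S :: "nat \<Rightarrow> (bit^'n) set"
  assumes "T \<in> orbit k S"
  shows "card (support k T) \<le> 2 ^ vec.dim (support k S)"
proof -
  obtain \<pi> where "T = tuple_image k \<pi> S"
    using assms by (rule orbitE)
  then have "card (support k T) \<le> card (support k S)"
    by (simp add: card_image_le)
  also have "\<dots> \<le> card (vec.span (support k S))"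
    by (intro card_mono vec.span_superset) simp
  also have "\<dots> \<le> 2 ^ vec.dim (support k S)"
    using vec.card_span_le_dim[where 'a = bit] by simp
  finally show ?thesis .
qed

lemma card_orbit_support_subset_le:
  fixes S :: "nat \<Rightarrow> (bit^'n) set"
  shows "card {T \<in> orbit k S. support k T \<subseteq> W} \<le> card W ^ vec.dim (support k S)"
proof -
  let ?U = "support k S"
  define Auts where "Auts = {\<pi> \<in> linear_auts. \<pi> ` ?U \<subseteq> W}"
  obtain b where b: "b \<subseteq> ?U" "vec.independent b" "?U \<subseteq> vec.span b" "card b = vec.dim ?U"
    using vec.basis_exists by blast
  have "{T \<in> orbit k S. support k T \<subseteq> W} = (\<lambda>\<pi>. tuple_image k \<pi> S) ` Auts"
    unfolding orbit_eq_image Auts_def by auto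
  (* a linear map, and hence its action on S, is determined by its values on the basis b *)
  also have "card \<dots> \<le> card ((\<lambda>\<pi>. restrict \<pi> b) ` Auts)"
  proof (rule card_image_le_card_image)
    fix \<pi> \<pi>' assume auts: "\<pi> \<in> Auts" "\<pi>' \<in> Auts" and eq: "restrict \<pi> b = restrict \<pi>' b"
    have "\<pi> v = \<pi>' v" if "v \<in> b" for v
      using fun_cong[OF eq, of v] that by simp
    then have "\<pi> x = \<pi>' x" if "x \<in> ?U" for x
      using auts b(3) that unfolding Auts_def linear_auts_def
      by (intro vec.linear_eq_on[of \<pi> \<pi>' x b]) auto
    then show "tuple_image k \<pi> S = tuple_image k \<pi>' S"
      unfolding tuple_image_def support_def by (intro restrict_ext image_cong refl) blast
  qed simp
  also have "\<dots> \<le> card (b \<rightarrow>\<^sub>E W)"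
    using b(1) by (intro card_mono) (auto simp: Auts_def finite_PiE image_subset_iff subset_iff)
  also have "\<dots> = card W ^ vec.dim ?U"
    using b(4) by (simp add: card_funcsetE)
  finally show ?thesis .
qed

lemma card_doubly_covered_orbit_tuples_le:
  fixes S :: "nat \<Rightarrow> (bit^'n) set" and k :: nat
  defines "d \<equiv> vec.dim (support k S)"
  shows "card {Q \<in> {..<4::nat} \<rightarrow>\<^sub>E orbit k S. doubly_covered {..<4} (\<lambda>j. support k (Q j))}
    \<le> 2 ^ (2 * d * CARD('n) + 8 * d\<^sup>2)"
proof -
  let ?G = "{Q \<in> {..<4::nat} \<rightarrow>\<^sub>E orbit k S. doubly_covered {..<4} (\<lambda>j. support k (Q j))}"
  let ?Cs = "{..<2 * d} \<rightarrow>\<^sub>E (UNIV :: (bit^'n) set)"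
  define V where "V C = vec.span (C ` {..<2 * d})" for C :: "nat \<Rightarrow> bit^'n"
  define Orb where "Orb W = {T \<in> orbit k S. support k T \<subseteq> W}" for W
  have cover: "?G \<subseteq> (\<Union>C \<in> ?Cs. {..<4::nat} \<rightarrow>\<^sub>E Orb (V C))"
  proof
    fix Q assume Q: "Q \<in> ?G"
    then have "vec.dim (\<Union>j<4. support k (Q j)) \<le> 2 * d"
      using dim_support_orbit_le unfolding d_def by (intro vec.dim_Union4_le_if_doubly_covered) auto
    then obtain C where C: "(\<Union>j<4. support k (Q j)) \<subseteq> V C"
      unfolding V_def by (rule vec.subset_span_image_lessThan)
    have "Q \<in> {..<4} \<rightarrow>\<^sub>E Orb (V C)"
      using Q C unfolding Orb_def by auto
    moreover have "V (restrict C {..<2 * d}) = V C"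
      unfolding V_def by simp
    ultimately show "Q \<in> (\<Union>C \<in> ?Cs. {..<4} \<rightarrow>\<^sub>E Orb (V C))"
      by (intro UN_I[of "restrict C {..<2 * d}"]) simp_all
  qed
  have card_Orb: "card (Orb (V C)) \<le> 2 ^ (2 * d * d)" for C
  proof -
    have "card (V C) ^ d \<le> (2 ^ (2 * d)) ^ d"
      unfolding V_def using vec.card_span_image_lessThan_le[where 'a = bit] by (intro power_mono) simp_all
    then show ?thesis
      using card_orbit_support_subset_le[of k S "V C"] unfolding Orb_def d_def
      by (simp add: power_mult)
  qed
  have "finite (Orb W)" for W
    unfolding Orb_def by (rule finite_subset[OF _ finite_orbit]) blast
  then have "card ?G \<le> card (\<Union>C \<in> ?Cs. {..<4::nat} \<rightarrow>\<^sub>E Orb (V C))"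
    using cover by (intro card_mono) (simp_all add: finite_PiE)
  also have "\<dots> \<le> (\<Sum>C \<in> ?Cs. card ({..<4::nat} \<rightarrow>\<^sub>E Orb (V C)))"
    by (rule card_UN_le) (simp add: finite_PiE)
  also have "\<dots> \<le> (\<Sum>C \<in> ?Cs. (2 ^ (2 * d * d)) ^ 4)"
    by (intro sum_mono) (simp add: card_funcsetE power_mono card_Orb)
  also have "\<dots> = (2 ^ CARD('n)) ^ (2 * d) * (2 ^ (2 * d * d)) ^ 4"
    by (simp add: card_funcsetE)
  also have "\<dots> = 2 ^ (2 * d * CARD('n) + 8 * d\<^sup>2)"
    unfolding power_mult[symmetric] power_add[symmetric] by (simp add: power2_eq_square algebra_simps)
  finally show ?thesis .
qed

lemma BMS_channel_finite_support:
  assumes "BMS_channel \<nu>"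
  shows "finite (set_pmf \<nu>)"
proof -
  obtain \<mu> :: "real pmf" where "finite (set_pmf \<mu>)"
    and \<nu>: "\<nu> = bind_pmf \<mu> (\<lambda>e. map_pmf (\<lambda>z. (e, z)) (bernoulli_pmf e))"
    using assms unfolding BMS_channel_def by blast
  moreover have "set_pmf \<nu> \<subseteq> set_pmf \<mu> \<times> UNIV"
    unfolding \<nu> by auto
  ultimately show ?thesis
    using finite_subset by fastforce
qed

lemma abs_expectation_pmf_le:
  fixes f :: "'a \<Rightarrow> real"
  assumes "finite (set_pmf M)" and "\<And>p. p \<in> set_pmf M \<Longrightarrow> \<bar>f p\<bar> \<le> C"
  shows "\<bar>measure_pmf.expectation M f\<bar> \<le> C"
proof -
  have "\<bar>measure_pmf.expectation M f\<bar> \<le> measure_pmf.expectation M (\<lambda>p. \<bar>f p\<bar>)"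
    by (rule integral_abs_bound)
  also have "\<dots> \<le> C"
    using assms by (intro measure_pmf.integral_le_const integrable_measure_pmf_finite AE_pmfI)
  finally show ?thesis .
qed

lemma expectation_Pi_pmf_prod:
  fixes f :: "'a::finite \<Rightarrow> 'b \<Rightarrow> real"
  assumes fin: "\<And>x. finite (set_pmf (p x))"
  shows "measure_pmf.expectation (Pi_pmf UNIV dflt p) (\<lambda>\<omega>. \<Prod>x\<in>UNIV. f x (\<omega> x))
       = (\<Prod>x\<in>UNIV. measure_pmf.expectation (p x) (f x))"
proof -
  let ?\<Omega> = "PiE UNIV (\<lambda>x. set_pmf (p x))"
  have set: "set_pmf (Pi_pmf UNIV dflt p) = ?\<Omega>"
    by (auto simp: set_Pi_pmf PiE_dflt_def PiE_def extensional_def Pi_def)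
  have "finite ?\<Omega>"
    by (intro finite_PiE) (auto simp: fin)
  then have "measure_pmf.expectation (Pi_pmf UNIV dflt p) (\<lambda>\<omega>. \<Prod>x\<in>UNIV. f x (\<omega> x))
      = (\<Sum>\<omega>\<in>?\<Omega>. pmf (Pi_pmf UNIV dflt p) \<omega> *\<^sub>R (\<Prod>x\<in>UNIV. f x (\<omega> x)))"
    by (rule integral_measure_pmf) (auto simp: set[symmetric])
  also have "\<dots> = (\<Sum>\<omega>\<in>?\<Omega>. \<Prod>x\<in>UNIV. pmf (p x) (\<omega> x) * f x (\<omega> x))"
    by (intro sum.cong refl) (simp add: pmf_Pi prod.distrib)
  also have "\<dots> = (\<Prod>x\<in>UNIV. \<Sum>y\<in>set_pmf (p x). pmf (p x) y * f x y)"
    by (rule prod_sum_PiE[symmetric]) (auto simp: fin)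
  also have "\<dots> = (\<Prod>x\<in>UNIV. measure_pmf.expectation (p x) (f x))"
    by (intro prod.cong refl) (simp add: integral_measure_pmf[OF fin])
  finally show ?thesis .
qed

lemma avg_power_sum:
  assumes "finite (set_pmf \<nu>)" and "finite A"
  shows "avg \<nu> (\<lambda>\<omega>. (\<Sum>T\<in>A. f T \<omega>) ^ n) = (\<Sum>Q\<in>{..<n} \<rightarrow>\<^sub>E A. avg \<nu> (\<lambda>\<omega>. \<Prod>j<n. f (Q j) \<omega>))"
proof -
  have expand: "(\<Sum>T\<in>A. f T \<omega>) ^ n = (\<Sum>Q\<in>{..<n} \<rightarrow>\<^sub>E A. \<Prod>j<n. f (Q j) \<omega>)" for \<omega>
    using prod_sum_PiE[of "{..<n}" "\<lambda>_. A" "\<lambda>_ T. f T \<omega>"] assms(2) by simp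
  have "finite (set_pmf (Pi_pmf (UNIV :: (bit^'n) set) undefined (\<lambda>_. \<nu>)))"
    using assms(1) by (simp add: set_Pi_pmf finite_PiE_dflt)
  then show ?thesis
    unfolding avg_def expand by (intro Bochner_Integration.integral_sum integrable_measure_pmf_finite)
qed

(* Off the support the index is 0, where X 0 = 1 makes the factor trivial. *)
definition label :: "nat \<Rightarrow> (nat \<Rightarrow> 'a set) \<Rightarrow> 'a \<Rightarrow> nat" where
  "label k T x = (if x \<in> support k T then THE i. i \<in> {1..<k} \<and> x \<in> T i else 0)"

lemma label_eqI:
  assumes "disjoint_family_on T {1..<k}" and "i \<in> {1..<k}" and "x \<in> T i"
  shows "label k T x = i"
proof -
  have "x \<in> support k T"
    using assms(2,3) unfolding support_def by blast
  moreover have "(THE i. i \<in> {1..<k} \<and> x \<in> T i) = i"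
  proof (rule the_equality)
    fix j assume "j \<in> {1..<k} \<and> x \<in> T j"
    then show "j = i"
      using assms disjoint_family_onD[OF assms(1), of j i] by blast
  qed (use assms in simp)
  ultimately show ?thesis
    unfolding label_def by simp
qed

lemma label_notin_support: "x \<notin> support k T \<Longrightarrow> label k T x = 0"
  unfolding label_def by simp

lemma label_in_support:
  assumes "disjoint_family_on T {1..<k}" and "x \<in> support k T"
  shows "label k T x \<in> {1..<k}"
  using assms label_eqI unfolding support_def by fastforce

lemma chiS_eq_prod_label:
  fixes T :: "nat \<Rightarrow> (bit^'n) set"
  assumes "disjoint_family_on T {1..<k}" and "X 0 = (\<lambda>_. 1)"
  shows "chiS X k T \<omega> = (\<Prod>x\<in>UNIV. X (label k T x) (\<omega> x))"
proof -
  have "chiS X k T \<omega> = (\<Prod>i\<in>{1..<k}. \<Prod>x\<in>T i. X (label k T x) (\<omega> x))"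
    unfolding chiS_def using assms(1) by (intro prod.cong refl) (simp add: label_eqI)
  also have "\<dots> = (\<Prod>x\<in>support k T. X (label k T x) (\<omega> x))"
    unfolding support_def using assms(1)
    by (intro prod.UNION_disjoint[symmetric]) (auto simp: disjoint_family_on_def)
  also have "\<dots> = (\<Prod>x\<in>UNIV. X (label k T x) (\<omega> x))"
    using assms(2) by (intro prod.mono_neutral_left) (auto simp: label_notin_support)
  finally show ?thesis .
qed

locale centred_family =
  fixes \<nu> :: "(real \<times> bool) pmf" and X :: "nat \<Rightarrow> real \<times> bool \<Rightarrow> real" and k :: nat and B :: real
  assumes finite_support: "finite (set_pmf \<nu>)"
    and X0: "X 0 = (\<lambda>_. 1)"
    and centred: "\<And>i. i \<in> {1..<k} \<Longrightarrow> measure_pmf.expectation \<nu> (X i) = 0"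
    and bounded: "\<And>i p. i \<in> {1..<k} \<Longrightarrow> p \<in> set_pmf \<nu> \<Longrightarrow> \<bar>X i p\<bar> \<le> B"
    and one_le_bound: "1 \<le> B"
begin

lemma avg_prod_chiS:
  fixes Q :: "'j \<Rightarrow> nat \<Rightarrow> (bit^'n) set"
  assumes "\<And>j. j \<in> J \<Longrightarrow> disjoint_family_on (Q j) {1..<k}"
  shows "avg \<nu> (\<lambda>\<omega>. \<Prod>j\<in>J. chiS X k (Q j) \<omega>)
    = (\<Prod>x\<in>UNIV. measure_pmf.expectation \<nu> (\<lambda>p. \<Prod>j\<in>J. X (label k (Q j) x) p))"
proof -
  have "(\<Prod>j\<in>J. chiS X k (Q j) \<omega>) = (\<Prod>x\<in>UNIV. \<Prod>j\<in>J. X (label k (Q j) x) (\<omega> x))" for \<omega>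
    using assms X0 by (simp add: chiS_eq_prod_label prod.swap[of _ J])
  then show ?thesis
    unfolding avg_def using finite_support
    by (simp add: expectation_Pi_pmf_prod[where f = "\<lambda>x p. \<Prod>j\<in>J. X (label k (Q j) x) p"])
qed

lemma avg_prod_chiS_eq_0:
  fixes Q :: "'j \<Rightarrow> nat \<Rightarrow> (bit^'n) set"
  assumes "finite J" and disj: "\<And>j. j \<in> J \<Longrightarrow> disjoint_family_on (Q j) {1..<k}"
    and "\<not> doubly_covered J (\<lambda>j. support k (Q j))"
  shows "avg \<nu> (\<lambda>\<omega>. \<Prod>j\<in>J. chiS X k (Q j) \<omega>) = 0"
proof -
  obtain j x where j: "j \<in> J" "x \<in> support k (Q j)"
    and lonely: "\<And>i. i \<in> J - {j} \<Longrightarrow> x \<notin> support k (Q i)"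
    using assms(3) unfolding doubly_covered_def by blast
  have "(\<Prod>i\<in>J - {j}. X (label k (Q i) x) p) = 1" for p
    using lonely X0 by (intro prod.neutral) (simp add: label_notin_support)
  then have "(\<Prod>i\<in>J. X (label k (Q i) x) p) = X (label k (Q j) x) p" for p
    using prod.remove[OF assms(1) j(1), of "\<lambda>i. X (label k (Q i) x) p"] by simp
  moreover have "measure_pmf.expectation \<nu> (X (label k (Q j) x)) = 0"
    using centred label_in_support[OF disj[OF j(1)] j(2)] by blast
  ultimately have "measure_pmf.expectation \<nu> (\<lambda>p. \<Prod>i\<in>J. X (label k (Q i) x) p) = 0"
    by simp
  then have "(\<Prod>x\<in>UNIV. measure_pmf.expectation \<nu> (\<lambda>p. \<Prod>i\<in>J. X (label k (Q i) x) p)) = 0"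
    by (intro prod_zero) auto
  moreover have "avg \<nu> (\<lambda>\<omega>. \<Prod>j\<in>J. chiS X k (Q j) \<omega>)
    = (\<Prod>x\<in>UNIV. measure_pmf.expectation \<nu> (\<lambda>p. \<Prod>i\<in>J. X (label k (Q i) x) p))"
    using disj by (rule avg_prod_chiS)
  ultimately show ?thesis
    by simp
qed

lemma abs_avg_prod_chiS_le:
  fixes Q :: "'j \<Rightarrow> nat \<Rightarrow> (bit^'n) set"
  assumes disj: "\<And>j. j \<in> J \<Longrightarrow> disjoint_family_on (Q j) {1..<k}"
  shows "\<bar>avg \<nu> (\<lambda>\<omega>. \<Prod>j\<in>J. chiS X k (Q j) \<omega>)\<bar> \<le> B ^ (\<Sum>j\<in>J. card (support k (Q j)))"
proof -
  define c where "c x j = (if x \<in> support k (Q j) then B else 1)" for x j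
  have "\<bar>X (label k (Q j) x) p\<bar> \<le> c x j" if "j \<in> J" "p \<in> set_pmf \<nu>" for j x p
    using X0 bounded label_in_support[OF disj[OF that(1)]] that(2)
    unfolding c_def by (auto simp: label_notin_support)
  then have "\<bar>measure_pmf.expectation \<nu> (\<lambda>p. \<Prod>j\<in>J. X (label k (Q j) x) p)\<bar> \<le> (\<Prod>j\<in>J. c x j)" for x
    by (intro abs_expectation_pmf_le[OF finite_support]) (simp add: abs_prod prod_mono)
  then have "\<bar>\<Prod>x\<in>UNIV. measure_pmf.expectation \<nu> (\<lambda>p. \<Prod>j\<in>J. X (label k (Q j) x) p)\<bar>
      \<le> (\<Prod>x\<in>UNIV. \<Prod>j\<in>J. c x j)"
    unfolding abs_prod by (intro prod_mono) auto
  moreover have "avg \<nu> (\<lambda>\<omega>. \<Prod>j\<in>J. chiS X k (Q j) \<omega>)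
      = (\<Prod>x\<in>UNIV. measure_pmf.expectation \<nu> (\<lambda>p. \<Prod>j\<in>J. X (label k (Q j) x) p))"
    using disj by (rule avg_prod_chiS)
  ultimately have "\<bar>avg \<nu> (\<lambda>\<omega>. \<Prod>j\<in>J. chiS X k (Q j) \<omega>)\<bar> \<le> (\<Prod>x\<in>UNIV. \<Prod>j\<in>J. c x j)"
    by simp
  also have "\<dots> = (\<Prod>j\<in>J. \<Prod>x\<in>UNIV. c x j)"
    by (rule prod.swap)
  also have "\<dots> = (\<Prod>j\<in>J. B ^ card (support k (Q j)))"
    unfolding c_def by (simp add: prod.If_cases)
  also have "\<dots> = B ^ (\<Sum>j\<in>J. card (support k (Q j)))"
    by (simp add: power_sum)
  finally show ?thesis .
qed

lemma avg_prod4_chiS_orbit_le: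
  fixes S :: "nat \<Rightarrow> (bit^'n) set" and Q :: "nat \<Rightarrow> nat \<Rightarrow> (bit^'n) set"
  assumes disj: "disjoint_family_on S {1..<k}" and Q: "Q \<in> {..<4} \<rightarrow>\<^sub>E orbit k S"
  shows "avg \<nu> (\<lambda>\<omega>. \<Prod>j<4. chiS X k (Q j) \<omega>)
    \<le> (if doubly_covered {..<4} (\<lambda>j. support k (Q j)) then B ^ 2 ^ (vec.dim (support k S) + 2) else 0)"
proof -
  have Q_disj: "disjoint_family_on (Q j) {1..<k}" if "j \<in> {..<4}" for j
    using disj PiE_mem[OF Q that] by (rule disjoint_family_on_orbit)
  show ?thesis
  proof (cases "doubly_covered {..<4} (\<lambda>j. support k (Q j))")
    case True
    have "(\<Sum>j<4. card (support k (Q j))) \<le> (\<Sum>j<4::nat. 2 ^ vec.dim (support k S))"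
      by (intro sum_mono card_support_orbit_le PiE_mem[OF Q]) assumption
    then have "B ^ (\<Sum>j<4. card (support k (Q j))) \<le> B ^ 2 ^ (vec.dim (support k S) + 2)"
      using one_le_bound by (intro power_increasing) simp_all
    moreover have "\<bar>avg \<nu> (\<lambda>\<omega>. \<Prod>j<4. chiS X k (Q j) \<omega>)\<bar> \<le> B ^ (\<Sum>j<4. card (support k (Q j)))"
      using Q_disj by (rule abs_avg_prod_chiS_le)
    ultimately show ?thesis
      using True by simp
  next
    case False
    have "avg \<nu> (\<lambda>\<omega>. \<Prod>j<4. chiS X k (Q j) \<omega>) = 0"
      using _ Q_disj False by (rule avg_prod_chiS_eq_0) simp
    then show ?thesis
      by (simp only: if_not_P[OF False] order_refl)
  qed
qed

lemma avg_chi_orbit_power4_le: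
  fixes S :: "nat \<Rightarrow> (bit^'n) set"
  assumes "disjoint_family_on S {1..<k}"
  shows "avg \<nu> (\<lambda>\<omega>. (chi_orbit X k S \<omega>) ^ 4)
    \<le> card {Q \<in> {..<4::nat} \<rightarrow>\<^sub>E orbit k S. doubly_covered {..<4} (\<lambda>j. support k (Q j))}
       * B ^ 2 ^ (vec.dim (support k S) + 2)"
proof -
  let ?Tuples = "{..<4::nat} \<rightarrow>\<^sub>E orbit k S"
  let ?G = "{Q \<in> ?Tuples. doubly_covered {..<4} (\<lambda>j. support k (Q j))}"
  let ?M = "B ^ 2 ^ (vec.dim (support k S) + 2)"
  have "avg \<nu> (\<lambda>\<omega>. (chi_orbit X k S \<omega>) ^ 4) = (\<Sum>Q\<in>?Tuples. avg \<nu> (\<lambda>\<omega>. \<Prod>j<4. chiS X k (Q j) \<omega>))"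
    unfolding chi_orbit_def using finite_support finite_orbit by (rule avg_power_sum)
  also have "\<dots> \<le> (\<Sum>Q\<in>?Tuples. if Q \<in> ?G then ?M else 0)"
    using avg_prod4_chiS_orbit_le[OF assms] by (intro sum_mono) simp
  also have "\<dots> = (\<Sum>Q\<in>?Tuples \<inter> ?G. ?M)"
    by (rule sum.inter_restrict[symmetric]) (simp add: finite_PiE finite_orbit)
  also have "?Tuples \<inter> ?G = ?G"
    by blast
  finally show ?thesis
    by simp
qed

end

theorem lemma13:
  fixes \<nu> :: "(real \<times> bool) pmf" and X :: "nat \<Rightarrow> real \<times> bool \<Rightarrow> real"
    and k :: nat and S :: "nat \<Rightarrow> (bit^'n) set"
  assumes "BMS_channel \<nu>"
    and "k = card (set_pmf \<nu>)"
    and "\<forall>i<k. \<forall>j<k. measure_pmf.expectation \<nu> (\<lambda>p. X i p * X j p) = (if i = j then 1 else 0)"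
    and "X 0 = (\<lambda>_. 1)"
    and "\<forall>i\<in>{1..<k}. \<forall>j\<in>{1..<k}. i \<noteq> j \<longrightarrow> S i \<inter> S j = {}"
  defines "d \<equiv> vec.dim (\<Union>i\<in>{1..<k}. S i)"
    and "m \<equiv> CARD('n)"
    and "B \<equiv> Max {\<bar>X i p\<bar> | i p. i < k \<and> p \<in> set_pmf \<nu>}"
  shows "avg \<nu> (\<lambda>\<omega>. (chi_orbit X k S \<omega>) ^ 4) \<le> (2::real) ^ (2*d*m + 8*d^2) * B ^ (2^(d+2))"
proof -
  have fin: "finite (set_pmf \<nu>)"
    using assms(1) by (rule BMS_channel_finite_support)
  have bound: "\<bar>X i p\<bar> \<le> B" if "i < k" "p \<in> set_pmf \<nu>" for i p
  proof -
    have "finite {\<bar>X i p\<bar> | i p. i < k \<and> p \<in> set_pmf \<nu>}"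
      using fin by (intro finite_image_set2) auto
    moreover have "\<bar>X i p\<bar> \<in> {\<bar>X i p\<bar> | i p. i < k \<and> p \<in> set_pmf \<nu>}"
      using that by blast
    ultimately show ?thesis
      unfolding B_def by (rule Max_ge)
  qed
  obtain p0 where p0: "p0 \<in> set_pmf \<nu>"
    using set_pmf_not_empty[of \<nu>] by blast
  then have "0 < k"
    using assms(2) fin card_gt_0_iff by blast
  then have "\<bar>X 0 p0\<bar> \<le> B"
    using p0 by (rule bound)
  then interpret centred_family \<nu> X k B
    using fin assms(3,4) bound by unfold_locales (auto dest: spec[of _ 0])
  have "disjoint_family_on S {1..<k}"
    using assms(5) unfolding disjoint_family_on_def .
  then have "avg \<nu> (\<lambda>\<omega>. (chi_orbit X k S \<omega>) ^ 4)
      \<le> card {Q \<in> {..<4::nat} \<rightarrow>\<^sub>E orbit k S. doubly_covered {..<4} (\<lambda>j. support k (Q j))}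
        * B ^ 2 ^ (d + 2)"
    unfolding d_def support_def[symmetric] by (rule avg_chi_orbit_power4_le)
  also have "\<dots> \<le> 2 ^ (2*d*m + 8*d^2) * B ^ 2 ^ (d + 2)"
    using card_doubly_covered_orbit_tuples_le[of k S] one_le_bound
    unfolding d_def m_def support_def[symmetric]
    by (intro mult_right_mono) (simp_all flip: of_nat_le_iff)
  finally show ?thesis .
qed

end
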